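(* Let $a_1,a_2,a_3,a_4$ be nonzero integers. There is a constant $C$ (depending at most on $a_1,\dots,a_4$) such that for every $n$ and every Sidon set $X\subseteq\{1,\dots,n\}$, the number of $4$-tuples $(x_1,x_2,x_3,x_4)\in X^4$ with $a_1x_1+a_2x_2+a_3x_3+a_4x_4=0$ is at most $Cn$.
   Context: A set $X$ of integers is a Sidon set if it has no nontrivial solution to $x_1+x_2=x_3+x_4$ with $x_i\in X$, where a solution is trivial if $(x_1,x_2)=(x_3,x_4)$ or $(x_1,x_2)=(x_4,x_3)$. *)

theory Defs
  imports Complex_Main
begin

definition sidon :: "int set \<Rightarrow> bool" where
  "sidon X \<longleftrightarrow> (\<forall>x1\<in>X. \<forall>x2\<in>X. \<forall>x3\<in>X. \<forall>x4\<in>X.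
      x1 + x2 = x3 + x4 \<longrightarrow> ((x1, x2) = (x3, x4) \<or> (x1, x2) = (x4, x3)))"

end

theory Submission
  imports Defs
begin

text \<open>
  Split a solution as \<open>a1 x1 + a2 x2 = -a3 x3 - a4 x4\<close>. By Cauchy-Schwarz, the number of
  coincidences between the two binary linear forms on \<open>X \<times> X\<close> is at most the average of their
  additive energies. For a Sidon set the energy of \<open>(x, y) \<mapsto> a x + b y\<close> is at most \<open>2 |X|\<^sup>2\<close>,
  since an off-diagonal coincidence is determined by its first coordinates (differences in a
  Sidon set are unique), and \<open>|X|\<^sup>2 \<le> 3n\<close> because the nonzero differences are distinct.
\<close>

definition coincidences :: "('a \<Rightarrow> 'c) \<Rightarrow> 'a set \<Rightarrow> ('b \<Rightarrow> 'c) \<Rightarrow> 'b set \<Rightarrow> ('a \<times> 'b) set" where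
  "coincidences f A h B = {(p, q). p \<in> A \<and> q \<in> B \<and> f p = h q}"

lemma card_coincidences_eq_sum:
  assumes "finite V" "f ` A \<subseteq> V" "h ` B \<subseteq> V" "finite A" "finite B"
  shows "card (coincidences f A h B) = (\<Sum>c\<in>V. card {p\<in>A. f p = c} * card {q\<in>B. h q = c})"
proof -
  have "coincidences f A h B = (\<Union>c\<in>V. {p\<in>A. f p = c} \<times> {q\<in>B. h q = c})"
    using assms(2,3) by (auto simp: coincidences_def)
  also have "card \<dots> = (\<Sum>c\<in>V. card ({p\<in>A. f p = c} \<times> {q\<in>B. h q = c}))"
    using assms by (intro card_UN_disjoint) auto
  finally show ?thesis by (simp add: card_cartesian_product)
qed

lemma two_mult_le_sum_squares_nat: "2 * (m::nat) * k \<le> m * m + k * k"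
proof -
  have "0 \<le> (int m - int k)\<^sup>2" by simp
  then have "int (2 * m * k) \<le> int (m * m + k * k)" by (simp add: power2_eq_square algebra_simps)
  then show ?thesis by linarith
qed

lemma card_coincidences_le:
  assumes "finite A" "finite B"
  shows "2 * card (coincidences f A h B)
    \<le> card (coincidences f A f A) + card (coincidences h B h B)"
proof -
  define V where "V = f ` A \<union> h ` B"
  have V: "finite V" "f ` A \<subseteq> V" "h ` B \<subseteq> V" using assms by (auto simp: V_def)
  show ?thesis
    using assms V
    by (simp add: card_coincidences_eq_sum sum_distrib_left sum.distrib[symmetric] sum_mono
        two_mult_le_sum_squares_nat mult.assoc[symmetric])
qed

lemma sidon_diff_eq:
  assumes "sidon X" "x \<in> X" "y \<in> X" "x' \<in> X" "y' \<in> X" "x - y = x' - y'" "x \<noteq> y"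
  shows "x = x' \<and> y = y'"
proof -
  have "x + y' = x' + y" using assms(6) by simp
  then have "(x, y') = (x', y) \<or> (x, y') = (y, x')"
    using assms(1-5) unfolding sidon_def by blast
  then show ?thesis using assms(7) by auto
qed

lemma card_coincidences_linear_sidon_le:
  fixes a b :: int
  defines "\<phi> \<equiv> \<lambda>(x, y). a * x + b * y"
  assumes "a \<noteq> 0" "b \<noteq> 0" "sidon X" "finite X"
  shows "card (coincidences \<phi> (X \<times> X) \<phi> (X \<times> X)) \<le> 2 * card (X \<times> X)"
proof -
  let ?E = "coincidences \<phi> (X \<times> X) \<phi> (X \<times> X)"
  define Off where "Off = {((x1, x2), (y1, y2)) \<in> ?E. x1 \<noteq> y1}"
  have E_split: "?E \<subseteq> (\<lambda>p. (p, p)) ` (X \<times> X) \<union> Off"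
    using \<open>b \<noteq> 0\<close> by (auto simp: coincidences_def Off_def \<phi>_def)
  have "inj_on (\<lambda>((x1, _), (y1, _)). (x1, y1)) Off"
  proof (rule inj_onI, clarify)
    fix x1 x2 y1 y2 x2' y2'
    assume u: "((x1, x2), (y1, y2)) \<in> Off" and v: "((x1, x2'), (y1, y2')) \<in> Off"
    then have mem: "x2 \<in> X" "y2 \<in> X" "x2' \<in> X" "y2' \<in> X" and "x1 \<noteq> y1"
      by (auto simp: Off_def coincidences_def)
    have "b * (x2 - y2) = a * (y1 - x1)" "b * (x2' - y2') = a * (y1 - x1)"
      using u v by (auto simp: Off_def coincidences_def \<phi>_def algebra_simps)
    then have "x2 - y2 = x2' - y2'" and "x2 \<noteq> y2"
      using \<open>a \<noteq> 0\<close> \<open>b \<noteq> 0\<close> \<open>x1 \<noteq> y1\<close> by (metis mult_cancel_left, auto)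
    then show "(x1, x2) = (x1, x2') \<and> (y1, y2) = (y1, y2')"
      using sidon_diff_eq[OF \<open>sidon X\<close> mem] by blast
  qed
  then have "card Off = card ((\<lambda>((x1, _), (y1, _)). (x1, y1)) ` Off)"
    by (rule card_image[symmetric])
  also have "\<dots> \<le> card (X \<times> X)"
    using \<open>finite X\<close> by (intro card_mono) (auto simp: Off_def coincidences_def)
  finally have card_Off: "card Off \<le> card (X \<times> X)" .
  have "Off \<subseteq> (X \<times> X) \<times> (X \<times> X)"
    by (auto simp: Off_def coincidences_def)
  then have "finite Off"
    using \<open>finite X\<close> by (auto intro: finite_subset)
  then have "card ?E \<le> card ((\<lambda>p. (p, p)) ` (X \<times> X) \<union> Off)"
    using E_split \<open>finite X\<close> by (intro card_mono) auto
  also have "\<dots> \<le> card (X \<times> X) + card Off"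
    using card_Un_le card_image_le[of "X \<times> X" "\<lambda>p. (p, p)"] \<open>finite X\<close>
    by (meson add_right_mono finite_SigmaI order_trans)
  also have "\<dots> \<le> 2 * card (X \<times> X)"
    using card_Off by simp
  finally show ?thesis .
qed

lemma sidon_card_Times_le:
  assumes "sidon X" "X \<subseteq> {1..int n}"
  shows "card (X \<times> X) \<le> 3 * n"
proof -
  have "finite X" using assms(2) finite_subset by blast
  define Off where "Off = {(x, y). x \<in> X \<and> y \<in> X \<and> x \<noteq> y}"
  have "inj_on (\<lambda>(x, y). x - y) Off"
    using sidon_diff_eq[OF assms(1)] by (auto intro!: inj_onI simp: Off_def)
  then have "card Off = card ((\<lambda>(x, y). x - y) ` Off)"
    by (rule card_image[symmetric])
  also have "\<dots> \<le> card ({- int n..int n} - {0})"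
    by (intro card_mono) (auto simp: Off_def dest!: subsetD[OF assms(2)])
  also have "\<dots> = 2 * n" by simp
  finally have card_Off: "card Off \<le> 2 * n" .
  have "X \<times> X = Off \<union> (\<lambda>x. (x, x)) ` X" by (auto simp: Off_def)
  then have "card (X \<times> X) \<le> card Off + card X"
    using card_Un_le card_image_le[OF \<open>finite X\<close>] by (metis add_left_mono order_trans)
  also have "card X \<le> n" using card_mono[OF _ assms(2)] by simp
  finally show ?thesis using card_Off by linarith
qed

theorem lemma1p18:
  fixes a1 a2 a3 a4 :: int
  assumes "a1 \<noteq> 0" "a2 \<noteq> 0" "a3 \<noteq> 0" "a4 \<noteq> 0"
  shows "\<exists>C::real. \<forall>(n::nat) (X::int set). X \<subseteq> {1..int n} \<and> sidon X \<longrightarrow>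
           real (card {(x1, x2, x3, x4). x1 \<in> X \<and> x2 \<in> X \<and> x3 \<in> X \<and> x4 \<in> X \<and>
                         a1 * x1 + a2 * x2 + a3 * x3 + a4 * x4 = 0}) \<le> C * real n"
proof (intro exI[of _ 6] allI impI, elim conjE)
  fix n :: nat and X :: "int set"
  assume X: "X \<subseteq> {1..int n}" "sidon X"
  have "finite X" using X(1) finite_subset by blast
  let ?S = "{(x1, x2, x3, x4). x1 \<in> X \<and> x2 \<in> X \<and> x3 \<in> X \<and> x4 \<in> X \<and>
                         a1 * x1 + a2 * x2 + a3 * x3 + a4 * x4 = 0}"
  define f where "f = (\<lambda>(x, y). a1 * x + a2 * y)"
  define h where "h = (\<lambda>(x, y). (- a3) * x + (- a4) * y)"
  let ?P = "coincidences f (X \<times> X) h (X \<times> X)"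
  have "?S = (\<lambda>((x1, x2), (x3, x4)). (x1, x2, x3, x4)) ` ?P"
    by (force simp: coincidences_def f_def h_def algebra_simps)
  moreover have "inj_on (\<lambda>((x1, x2), (x3, x4)). (x1, x2, x3, x4)) ?P"
    by (auto simp: inj_on_def)
  ultimately have "card ?S = card ?P" by (simp add: card_image)
  have "2 * card ?P
      \<le> card (coincidences f (X \<times> X) f (X \<times> X)) + card (coincidences h (X \<times> X) h (X \<times> X))"
    using \<open>finite X\<close> by (intro card_coincidences_le) auto
  also have "\<dots> \<le> 4 * card (X \<times> X)"
    using card_coincidences_linear_sidon_le[of a1 a2 X]
      card_coincidences_linear_sidon_le[of "- a3" "- a4" X] assms X(2) \<open>finite X\<close> unfolding f_def h_def by simp
  finally have "card ?S \<le> 2 * card (X \<times> X)" using \<open>card ?S = card ?P\<close> by simp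
  then have "card ?S \<le> 6 * n" using sidon_card_Times_le[OF X(2,1)] by linarith
  then show "real (card ?S) \<le> 6 * real n" by simp
qed

end
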